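(* Let $f,g\in\mathbb L^2([0,1])$ with $\Delta=\|f-g\|>0$, and let $X$ be distributed according to the model below. Then for all $\epsilon<1/4$, \[ \mathbb P\Big(\big|\eta(X)-\tfrac12\big|\le\epsilon\Big)\ge(2\pi)^{-1/2}\Big[\frac\epsilon\Delta e^{-(1+\Delta/2)^2/2}\wedge\frac{e^{-1/2}}2\Big]. \]
   Context: Model: $Y\sim\mathrm{Bernoulli}(1/2)$ independent of a standard Brownian motion $W$ on $[0,1]$, and $dX(t)=Yf(t)\,dt+(1-Y)g(t)\,dt+dW(t)$. Regression function $\eta(X)=\mathbb P(Y=1\mid X)=\dfrac{\exp(\int_0^1(f-g)\,dX-\frac12\|f\|^2+\frac12\|g\|^2)}{1+\exp(\int_0^1(f-g)\,dX-\frac12\|f\|^2+\frac12\|g\|^2)}$. $\|\cdot\|$ is the $\mathbb L^2([0,1])$ norm; $a\wedge b=\min\{a,b\}$. *)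

theory Defs
  imports "HOL-Probability.Probability"
begin

text \<open>The space L2([0,1]) (as functions; a.e.-equal functions are identified only through the
isonormal process, which does not distinguish them), its inner product and norm.\<close>

definition L2_01 :: "(real \<Rightarrow> real) set" where
  "L2_01 = {h. h \<in> borel_measurable lborel \<and>
               set_integrable lborel {0..1} (\<lambda>t. (h t)\<^sup>2)}"

definition L2_inner :: "(real \<Rightarrow> real) \<Rightarrow> (real \<Rightarrow> real) \<Rightarrow> real" where
  "L2_inner h k = (LINT t:{0..1}|lborel. h t * k t)"

definition L2_norm :: "(real \<Rightarrow> real) \<Rightarrow> real" where
  "L2_norm h = sqrt (L2_inner h h)"

text \<open>A standard Brownian motion on [0,1], represented through its Wiener integrals
  W h = \<integral>_0^1 h dW (h in L2([0,1])), i.e. as an isonormal Gaussian process on L2([0,1]):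
  W is a.s. linear and each W h is centred normal with variance \<parallel>h\<parallel>^2.
  (Linearity plus Gaussian marginals makes the family jointly Gaussian with covariance
  the L2 inner product; Brownian motion is W(t) = W(indicator [0,t]).)\<close>

definition isonormal_L2_01 :: "'a measure \<Rightarrow> ((real \<Rightarrow> real) \<Rightarrow> 'a \<Rightarrow> real) \<Rightarrow> bool" where
  "isonormal_L2_01 M W \<longleftrightarrow>
     (\<forall>h\<in>L2_01.
        (L2_norm h = 0 \<longrightarrow> W h \<in> borel_measurable M \<and> (AE \<omega> in M. W h \<omega> = 0)) \<and>
        (L2_norm h > 0 \<longrightarrow> distributed M lborel (W h) (normal_density 0 (L2_norm h)))) \<and>
     (\<forall>h\<in>L2_01. \<forall>k\<in>L2_01. \<forall>a b.
        AE \<omega> in M. W (\<lambda>t. a * h t + b * k t) \<omega> = a * W h \<omega> + b * W k \<omega>)"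

text \<open>The Wiener integral \<integral>_0^1 h dX for dX = Y f dt + (1 - Y) g dt + dW.\<close>

definition int_dX ::
  "(real \<Rightarrow> real) \<Rightarrow> (real \<Rightarrow> real) \<Rightarrow> ('a \<Rightarrow> bool) \<Rightarrow> ((real \<Rightarrow> real) \<Rightarrow> 'a \<Rightarrow> real)
    \<Rightarrow> (real \<Rightarrow> real) \<Rightarrow> 'a \<Rightarrow> real" where
  "int_dX f g Y W h \<omega> =
     of_bool (Y \<omega>) * L2_inner h f + (1 - of_bool (Y \<omega>)) * L2_inner h g + W h \<omega>"

text \<open>The regression function \<eta>(X) = P(Y = 1 | X).\<close>

definition eta_X ::
  "(real \<Rightarrow> real) \<Rightarrow> (real \<Rightarrow> real) \<Rightarrow> ('a \<Rightarrow> bool) \<Rightarrow> ((real \<Rightarrow> real) \<Rightarrow> 'a \<Rightarrow> real)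
    \<Rightarrow> 'a \<Rightarrow> real" where
  "eta_X f g Y W \<omega> =
     (let z = int_dX f g Y W (\<lambda>t. f t - g t) \<omega> - (L2_norm f)\<^sup>2 / 2 + (L2_norm g)\<^sup>2 / 2
      in exp z / (1 + exp z))"

end

theory Submission
  imports Defs
begin

text \<open>Write \<delta> = f - g and \<Delta> = \<parallel>\<delta>\<parallel>. The exponent in \<eta>(X) is z = W \<delta> + \<Delta>^2/2 if Y = 1 and
  z = W \<delta> - \<Delta>^2/2 if Y = 0, where W \<delta> ~ N(0, \<Delta>^2) is independent of Y, and the logistic
  function satisfies |\<eta> - 1/2| \<le> |z|/2. Hence |\<eta>(X) - 1/2| \<le> \<epsilon> as soon as W \<delta> lies within
  \<beta> = min(2\<epsilon>, \<Delta>) of -\<Delta>^2/2 (if Y = 1) or of \<Delta>^2/2 (if Y = 0). On both intervals the N(0, \<Delta>^2)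
  density is at least e^(-(1+\<Delta>/2)^2/2) / (sqrt(2\<pi>) \<Delta>), so the probability is at least 2\<beta> times
  that bound; the cases \<beta> = 2\<epsilon> and \<beta> = \<Delta> < 1/2 give the two terms of the minimum.\<close>

lemma logistic_minus_half_abs_le:
  fixes z :: real
  shows "\<bar>exp z / (1 + exp z) - 1 / 2\<bar> \<le> \<bar>z\<bar> / 2"
proof -
  have pos: "0 < 1 + exp z"
    by (simp add: add_pos_pos)
  have "\<bar>exp z - 1\<bar> \<le> \<bar>z\<bar> * (1 + exp z)"
  proof (cases "0 \<le> z")
    case True
    have "exp z * (1 - z) \<le> exp z * exp (- z)"
      using exp_ge_add_one_self[of "- z"] by (intro mult_left_mono) auto
    then show ?thesis
      using True by (simp add: exp_minus_inverse algebra_simps)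
  next
    case False
    have "1 - exp z \<le> - z"
      using exp_ge_add_one_self[of z] by linarith
    also have "\<dots> \<le> - z * (1 + exp z)"
      using False by (simp add: algebra_simps mult_nonpos_nonneg)
    finally show ?thesis
      using False by simp
  qed
  moreover have "exp z / (1 + exp z) - 1 / 2 = (exp z - 1) / (2 * (1 + exp z))"
    using pos by (simp add: field_simps)
  ultimately show ?thesis
    using pos by (simp add: abs_div divide_simps algebra_simps)
qed

lemma normal_density_ge:
  fixes \<sigma> r x :: real
  assumes "0 < \<sigma>" and "\<bar>x\<bar> \<le> r"
  shows "exp (- r\<^sup>2 / (2 * \<sigma>\<^sup>2)) / (sqrt (2 * pi) * \<sigma>) \<le> normal_density 0 \<sigma> x"
proof -
  have "x\<^sup>2 \<le> r\<^sup>2"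
    using assms(2) abs_le_square_iff[of x r] by simp
  then have "exp (- r\<^sup>2 / (2 * \<sigma>\<^sup>2)) \<le> exp (- x\<^sup>2 / (2 * \<sigma>\<^sup>2))"
    using assms(1) by (simp add: divide_right_mono)
  moreover have "sqrt (2 * pi * \<sigma>\<^sup>2) = sqrt (2 * pi) * \<sigma>"
    using assms(1) by (simp add: real_sqrt_mult)
  ultimately show ?thesis
    using assms(1) by (simp add: normal_density_def divide_right_mono)
qed

lemma (in prob_space) prob_interval_ge_density_bound:
  assumes X: "distributed M lborel X (\<lambda>x. ennreal (p x))"
    and m: "0 \<le> m" "\<And>x. x \<in> {a..b} \<Longrightarrow> m \<le> p x"
    and "a \<le> b"
  shows "m * (b - a) \<le> prob (X -` {a..b} \<inter> space M)"
proof -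
  have "ennreal (m * (b - a)) = (\<integral>\<^sup>+x. ennreal m * indicator {a..b} x \<partial>lborel)"
    using assms by (simp add: nn_integral_cmult_indicator ennreal_mult)
  also have "\<dots> \<le> (\<integral>\<^sup>+x. ennreal (p x) * indicator {a..b} x \<partial>lborel)"
    by (intro nn_integral_mono) (auto simp: indicator_def intro!: ennreal_leI m)
  also have "\<dots> = emeasure M (X -` {a..b} \<inter> space M)"
    using distributed_emeasure[OF X] by simp
  finally show ?thesis
    by (simp add: emeasure_eq_measure ennreal_le_iff)
qed

lemma L2_01_mult_integrable:
  assumes "f \<in> L2_01" and "g \<in> L2_01"
  shows "set_integrable lborel {0..1} (\<lambda>t. f t * g t)"
proof (rule set_integrable_bound[where f = "\<lambda>t. (f t)\<^sup>2 + (g t)\<^sup>2"])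
  have [measurable]: "f \<in> borel_measurable lborel" "g \<in> borel_measurable lborel"
    using assms unfolding L2_01_def by auto
  show "set_integrable lborel {0..1} (\<lambda>t. (f t)\<^sup>2 + (g t)\<^sup>2)"
    using assms unfolding L2_01_def by (intro set_integral_add) auto
  show "set_borel_measurable lborel {0..1} (\<lambda>t. f t * g t)"
    unfolding set_borel_measurable_def by measurable
  have "\<bar>a * b\<bar> \<le> a\<^sup>2 + b\<^sup>2" for a b :: real
    using sum_squares_bound[of "\<bar>a\<bar>" "\<bar>b\<bar>"] abs_ge_zero[of "a * b"]
    unfolding abs_mult power2_abs by linarith
  then show "AE t in lborel. t \<in> {0..1} \<longrightarrow> norm (f t * g t) \<le> norm ((f t)\<^sup>2 + (g t)\<^sup>2)"
    by simp
qed

lemma L2_01_diff: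
  assumes "f \<in> L2_01" and "g \<in> L2_01"
  shows "(\<lambda>t. f t - g t) \<in> L2_01"
proof -
  have [measurable]: "f \<in> borel_measurable lborel" "g \<in> borel_measurable lborel"
    using assms unfolding L2_01_def by auto
  have "set_integrable lborel {0..1} (\<lambda>t. f t * f t - 2 * (f t * g t) + g t * g t)"
    using assms by (intro set_integral_add set_integral_diff set_integrable_mult_right
        L2_01_mult_integrable)
  moreover have "(\<lambda>t. f t * f t - 2 * (f t * g t) + g t * g t) = (\<lambda>t. (f t - g t)\<^sup>2)"
    by (simp add: fun_eq_iff power2_eq_square algebra_simps)
  ultimately show ?thesis
    unfolding L2_01_def by simp
qed

lemma L2_inner_commute: "L2_inner h k = L2_inner k h"
  unfolding L2_inner_def by (simp add: mult.commute)

lemma L2_inner_diff_left: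
  assumes "f \<in> L2_01" and "g \<in> L2_01" and "k \<in> L2_01"
  shows "L2_inner (\<lambda>t. f t - g t) k = L2_inner f k - L2_inner g k"
  unfolding L2_inner_def left_diff_distrib
  using assms by (intro set_integral_diff L2_01_mult_integrable)

lemma L2_norm_square: "(L2_norm h)\<^sup>2 = L2_inner h h"
proof -
  have "0 \<le> L2_inner h h"
    unfolding L2_inner_def set_lebesgue_integral_def
    by (rule integral_nonneg_AE) (auto simp: indicator_def)
  then show ?thesis
    unfolding L2_norm_def by simp
qed

lemma L2_log_likelihood_ratio:
  assumes "f \<in> L2_01" and "g \<in> L2_01"
  shows "L2_inner (\<lambda>t. f t - g t) f - (L2_norm f)\<^sup>2 / 2 + (L2_norm g)\<^sup>2 / 2
           = (L2_norm (\<lambda>t. f t - g t))\<^sup>2 / 2"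
    and "L2_inner (\<lambda>t. f t - g t) g - (L2_norm f)\<^sup>2 / 2 + (L2_norm g)\<^sup>2 / 2
           = - (L2_norm (\<lambda>t. f t - g t))\<^sup>2 / 2"
  using L2_inner_diff_left[OF assms L2_01_diff[OF assms]]
    L2_inner_diff_left[OF assms assms(1)] L2_inner_diff_left[OF assms assms(2)]
    L2_inner_commute[of f "\<lambda>t. f t - g t"] L2_inner_commute[of g "\<lambda>t. f t - g t"]
    L2_inner_commute[of g f]
  unfolding L2_norm_square by linarith+

lemma exp_neg_half_le_four_exp:
  fixes D :: real
  assumes "0 \<le> D" and "D < 1 / 2"
  shows "exp (- 1 / 2) \<le> 4 * exp (- (1 + D / 2)\<^sup>2 / 2)"
proof -
  have "1 / 4 \<le> exp (- (9 / 32 :: real))"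
    using exp_ge_add_one_self[of "- (9 / 32) :: real"] by simp
  then have "exp (- 1 / 2) \<le> exp (- 1 / 2) * (4 * exp (- (9 / 32 :: real)))"
    by simp
  also have "\<dots> = 4 * exp (- (25 / 32 :: real))"
    by (simp add: exp_add[symmetric])
  also have "\<dots> \<le> 4 * exp (- (1 + D / 2)\<^sup>2 / 2)"
  proof -
    have "(1 + D / 2)\<^sup>2 \<le> (5 / 4)\<^sup>2"
      using assms by (intro power_mono) auto
    then show ?thesis
      by (simp add: power2_eq_square)
  qed
  finally show ?thesis .
qed

lemma min_bound_le_interval_bound:
  fixes \<epsilon> D :: real
  assumes "0 < \<epsilon>" and "\<epsilon> < 1 / 4" and "0 < D"
  defines "E \<equiv> exp (- (1 + D / 2)\<^sup>2 / 2)"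
  shows "1 / sqrt (2 * pi) * min (\<epsilon> / D * E) (exp (- 1 / 2) / 2)
           \<le> 2 * min (2 * \<epsilon>) D * E / (sqrt (2 * pi) * D)"
proof (cases "2 * \<epsilon> \<le> D")
  case True
  have "1 / sqrt (2 * pi) * min (\<epsilon> / D * E) (exp (- 1 / 2) / 2)
      \<le> 1 / sqrt (2 * pi) * (\<epsilon> / D * E)"
    by (intro mult_left_mono) auto
  also have "\<dots> \<le> 2 * (2 * \<epsilon>) * E / (sqrt (2 * pi) * D)"
    using assms by (simp add: E_def field_simps)
  finally show ?thesis
    using True by simp
next
  case False
  have "exp (- 1 / 2) / 2 \<le> 2 * E"
    using exp_neg_half_le_four_exp[of D] False assms unfolding E_def by simp
  then have "1 / sqrt (2 * pi) * min (\<epsilon> / D * E) (exp (- 1 / 2) / 2)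
      \<le> 1 / sqrt (2 * pi) * (2 * E)"
    by (intro mult_left_mono) auto
  also have "\<dots> = 2 * D * E / (sqrt (2 * pi) * D)"
    using assms by simp
  finally show ?thesis
    using False by simp
qed

locale two_signal_model = prob_space M
  for M :: "'a measure" and Y :: "'a \<Rightarrow> bool" and W :: "(real \<Rightarrow> real) \<Rightarrow> 'a \<Rightarrow> real"
    and f g :: "real \<Rightarrow> real" +
  assumes f_L2: "f \<in> L2_01" and g_L2: "g \<in> L2_01"
    and separated: "L2_norm (\<lambda>t. f t - g t) > 0"
    and Y_measurable [measurable]: "Y \<in> measurable M (count_space UNIV)"
    and prob_Y: "prob {\<omega> \<in> space M. Y \<omega>} = 1 / 2"
    and isonormal: "isonormal_L2_01 M W"
    and Y_W_indep: "indep_set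
           {Y -` A \<inter> space M | A. A \<in> sets (count_space UNIV)}
           {(\<lambda>\<omega>. restrict (\<lambda>h. W h \<omega>) L2_01) -` B \<inter> space M | B.
              B \<in> sets (PiM L2_01 (\<lambda>_. borel))}"
begin

abbreviation \<delta> :: "real \<Rightarrow> real" where
  "\<delta> \<equiv> \<lambda>t. f t - g t"

abbreviation \<Delta> :: real where
  "\<Delta> \<equiv> L2_norm \<delta>"

lemma \<delta>_L2: "\<delta> \<in> L2_01"
  using L2_01_diff[OF f_L2 g_L2] .

lemma W_\<delta>_distributed: "distributed M lborel (W \<delta>) (\<lambda>x. ennreal (normal_density 0 \<Delta> x))"
  using isonormal \<delta>_L2 separated unfolding isonormal_L2_01_def by auto

lemma W_\<delta>_measurable [measurable]: "W \<delta> \<in> borel_measurable M"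
  using distributed_measurable[OF W_\<delta>_distributed] by simp

lemma eta_X_eq_logistic:
  "eta_X f g Y W \<omega> =
     (let z = (if Y \<omega> then \<Delta>\<^sup>2 / 2 else - \<Delta>\<^sup>2 / 2) + W \<delta> \<omega> in exp z / (1 + exp z))"
proof -
  have "int_dX f g Y W \<delta> \<omega> - (L2_norm f)\<^sup>2 / 2 + (L2_norm g)\<^sup>2 / 2
      = (if Y \<omega> then \<Delta>\<^sup>2 / 2 else - \<Delta>\<^sup>2 / 2) + W \<delta> \<omega>"
    using L2_log_likelihood_ratio[OF f_L2 g_L2] unfolding int_dX_def by auto
  then show ?thesis
    unfolding eta_X_def by simp
qed

lemma eta_X_measurable [measurable]: "eta_X f g Y W \<in> borel_measurable M"
proof -
  have [measurable]: "Measurable.pred M Y"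
    unfolding pred_def using Y_measurable by simp
  show ?thesis
    unfolding eta_X_eq_logistic[abs_def] Let_def by measurable
qed

lemma prob_Y_eq: "prob {\<omega> \<in> space M. Y \<omega> = b} = 1 / 2"
proof (cases b)
  case False
  have "{\<omega> \<in> space M. Y \<omega> = False} = space M - {\<omega> \<in> space M. Y \<omega>}"
    by auto
  then show ?thesis
    using False prob_Y by (simp add: prob_compl)
qed (simp add: prob_Y)

lemma prob_Y_inter_W:
  assumes "h \<in> L2_01" and "I \<in> sets borel"
  shows "prob ({\<omega> \<in> space M. Y \<omega> = b} \<inter> (W h -` I \<inter> space M))
           = prob (W h -` I \<inter> space M) / 2"
proof -
  let ?P = "PiM L2_01 (\<lambda>_. borel)"
  have "(\<lambda>x. x h) -` I \<inter> space ?P \<in> sets ?P"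
    using measurable_sets[OF measurable_component_singleton[OF assms(1)] assms(2)] by simp
  moreover have "W h -` I \<inter> space M
      = (\<lambda>\<omega>. restrict (\<lambda>h. W h \<omega>) L2_01) -` ((\<lambda>x. x h) -` I \<inter> space ?P) \<inter> space M"
    using assms(1) by (auto simp: space_PiM PiE_iff)
  ultimately have W_event: "W h -` I \<inter> space M
      \<in> {(\<lambda>\<omega>. restrict (\<lambda>h. W h \<omega>) L2_01) -` B \<inter> space M | B. B \<in> sets ?P}"
    by blast
  have Y_event: "Y -` {b} \<inter> space M \<in> {Y -` A \<inter> space M | A. A \<in> sets (count_space UNIV)}"
    by auto
  have "{\<omega> \<in> space M. Y \<omega> = b} = Y -` {b} \<inter> space M"
    by auto
  then show ?thesis
    using indep_setD[OF Y_W_indep Y_event W_event] prob_Y_eq[of b] by simp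
qed

lemma prob_W_\<delta>_interval_ge:
  assumes "0 < \<beta>" and "\<beta> \<le> \<Delta>" and "\<bar>c\<bar> = \<Delta>\<^sup>2 / 2"
  shows "2 * \<beta> * exp (- (1 + \<Delta> / 2)\<^sup>2 / 2) / (sqrt (2 * pi) * \<Delta>)
           \<le> prob (W \<delta> -` {c - \<beta> .. c + \<beta>} \<inter> space M)"
proof -
  let ?m = "exp (- (1 + \<Delta> / 2)\<^sup>2 / 2) / (sqrt (2 * pi) * \<Delta>)"
  have "?m \<le> normal_density 0 \<Delta> x" if "x \<in> {c - \<beta> .. c + \<beta>}" for x
  proof -
    have "\<bar>x\<bar> \<le> \<Delta> * (1 + \<Delta> / 2)"
      using that assms by (auto simp: power2_eq_square algebra_simps)
    from normal_density_ge[OF separated this]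
    show ?thesis
      using separated by (simp add: power_mult_distrib)
  qed
  then have "?m * ((c + \<beta>) - (c - \<beta>)) \<le> prob (W \<delta> -` {c - \<beta> .. c + \<beta>} \<inter> space M)"
    using assms separated by (intro prob_interval_ge_density_bound[OF W_\<delta>_distributed]) auto
  then show ?thesis
    by (simp add: field_simps)
qed

lemma prob_eta_X_near_half_ge:
  assumes "0 < \<beta>" and "\<beta> \<le> \<Delta>"
  shows "2 * \<beta> * exp (- (1 + \<Delta> / 2)\<^sup>2 / 2) / (sqrt (2 * pi) * \<Delta>)
           \<le> prob {\<omega> \<in> space M. \<bar>eta_X f g Y W \<omega> - 1 / 2\<bar> \<le> \<beta> / 2}"
proof -
  define c :: "bool \<Rightarrow> real" where "c b = (if b then - \<Delta>\<^sup>2 / 2 else \<Delta>\<^sup>2 / 2)" for b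
  define near where
    "near b = {\<omega> \<in> space M. Y \<omega> = b} \<inter> (W \<delta> -` {c b - \<beta> .. c b + \<beta>} \<inter> space M)" for b
  let ?S = "{\<omega> \<in> space M. \<bar>eta_X f g Y W \<omega> - 1 / 2\<bar> \<le> \<beta> / 2}"
  have "near True \<union> near False \<subseteq> ?S"
  proof
    fix \<omega> assume "\<omega> \<in> near True \<union> near False"
    then have "\<omega> \<in> space M" and "\<bar>W \<delta> \<omega> - c (Y \<omega>)\<bar> \<le> \<beta>"
      unfolding near_def by auto
    moreover have "eta_X f g Y W \<omega> = exp (W \<delta> \<omega> - c (Y \<omega>)) / (1 + exp (W \<delta> \<omega> - c (Y \<omega>)))"
      unfolding eta_X_eq_logistic c_def Let_def by (simp add: algebra_simps)
    ultimately show "\<omega> \<in> ?S"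
      using logistic_minus_half_abs_le[of "W \<delta> \<omega> - c (Y \<omega>)"] by simp
  qed
  moreover have "?S \<in> sets M"
    by measurable
  ultimately have "prob (near True \<union> near False) \<le> prob ?S"
    by (rule finite_measure_mono)
  also have "prob (near True \<union> near False) = prob (near True) + prob (near False)"
    unfolding near_def by (intro finite_measure_Union) auto
  finally have sum_le: "prob (near True) + prob (near False) \<le> prob ?S" .
  have near_ge: "2 * \<beta> * exp (- (1 + \<Delta> / 2)\<^sup>2 / 2) / (sqrt (2 * pi) * \<Delta>) \<le> 2 * prob (near b)"
    for b
  proof -
    have "prob (near b) = prob (W \<delta> -` {c b - \<beta> .. c b + \<beta>} \<inter> space M) / 2"
      unfolding near_def by (rule prob_Y_inter_W[OF \<delta>_L2]) simp
    moreover have "\<bar>c b\<bar> = \<Delta>\<^sup>2 / 2"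
      by (simp add: c_def)
    ultimately show ?thesis
      using prob_W_\<delta>_interval_ge[OF assms, of "c b"] by simp
  qed
  show ?thesis
    using sum_le near_ge[of True] near_ge[of False] by linarith
qed

end

theorem proposition4:
  fixes M :: "'a measure" and Y :: "'a \<Rightarrow> bool"
    and W :: "(real \<Rightarrow> real) \<Rightarrow> 'a \<Rightarrow> real"
    and f g :: "real \<Rightarrow> real" and \<epsilon> :: real
  assumes "prob_space M"
    and "f \<in> L2_01" and "g \<in> L2_01"
    and "L2_norm (\<lambda>t. f t - g t) > 0"
    and "Y \<in> measurable M (count_space UNIV)"
    and "prob_space.prob M {\<omega> \<in> space M. Y \<omega>} = 1 / 2"
    and "isonormal_L2_01 M W"
    and "prob_space.indep_set M
           {Y -` A \<inter> space M | A. A \<in> sets (count_space UNIV)}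
           {(\<lambda>\<omega>. restrict (\<lambda>h. W h \<omega>) L2_01) -` B \<inter> space M | B.
              B \<in> sets (PiM L2_01 (\<lambda>_. borel))}"
    and "\<epsilon> < 1 / 4"
  shows "prob_space.prob M {\<omega> \<in> space M. \<bar>eta_X f g Y W \<omega> - 1 / 2\<bar> \<le> \<epsilon>}
           \<ge> 1 / sqrt (2 * pi) *
             min (\<epsilon> / L2_norm (\<lambda>t. f t - g t)
                    * exp (- (1 + L2_norm (\<lambda>t. f t - g t) / 2)\<^sup>2 / 2))
                 (exp (- 1 / 2) / 2)"
proof -
  interpret two_signal_model M Y W f g
    using assms(1-8) unfolding two_signal_model_def two_signal_model_axioms_def by blast
  show ?thesis
  proof (cases "\<epsilon> \<le> 0")
    case True
    then have "1 / sqrt (2 * pi) * min (\<epsilon> / \<Delta> * exp (- (1 + \<Delta> / 2)\<^sup>2 / 2)) (exp (- 1 / 2) / 2)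
        \<le> 0"
      using separated
      by (simp add: mult_nonneg_nonpos min_le_iff_disj divide_nonpos_pos mult_nonpos_nonneg)
    then show ?thesis
      by (meson measure_nonneg order_trans)
  next
    case False
    let ?\<beta> = "min (2 * \<epsilon>) \<Delta>"
    have "1 / sqrt (2 * pi) * min (\<epsilon> / \<Delta> * exp (- (1 + \<Delta> / 2)\<^sup>2 / 2)) (exp (- 1 / 2) / 2)
        \<le> 2 * ?\<beta> * exp (- (1 + \<Delta> / 2)\<^sup>2 / 2) / (sqrt (2 * pi) * \<Delta>)"
      using False assms(9) separated by (intro min_bound_le_interval_bound) auto
    also have "\<dots> \<le> prob {\<omega> \<in> space M. \<bar>eta_X f g Y W \<omega> - 1 / 2\<bar> \<le> ?\<beta> / 2}"
      using False separated by (intro prob_eta_X_near_half_ge) auto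
    also have "\<dots> \<le> prob {\<omega> \<in> space M. \<bar>eta_X f g Y W \<omega> - 1 / 2\<bar> \<le> \<epsilon>}"
      by (intro finite_measure_mono) auto
    finally show ?thesis .
  qed
qed

end
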